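(* Let $S$ be any set, $m\ge 1$, and $s,s'\in S^m$. Then $s$ and $s'$ are mirrored if and only if $s=s'$ or $s=\mathrm{rev}\,s'$.
   Context: $\mathcal{S}_m$ is the group of bijections of $I_m=\{1,\ldots,m\}$, with $\sigma\circ\tau$ meaning apply $\tau$ first. $\mathscr{T}_m=\{\sigma\in\mathcal{S}_m \mid \exists t\in I_m:\ \sigma(1)>\sigma(2)>\cdots>\sigma(t)=1,\ \sigma(t)<\sigma(t+1)<\cdots<\sigma(m)\}$. A sequence $s\in S^m$ is viewed as a function $s:I_m\to S$, and $\mathcal{S}_m$ acts on $S^m$ on the left by $\sigma s=s\circ\sigma^{-1}$, i.e. $\sigma(s_1,\ldots,s_m)=(s_{\sigma^{-1}(1)},\ldots,s_{\sigma^{-1}(m)})$. For $i\in I_m$, $\tau_i(j)=i+1-j$ for $j\le i$ and $\tau_i(j)=j$ for $j>i$; $\mathrm{rev}\,s:=\tau_m s$ is the reversed sequence. Two sequences $s,s'\in S^m$ are called mirrored if for every $\sigma\in\mathscr{T}_m$ there exists $\sigma'\in\mathscr{T}_m$ with $\sigma s=\sigma' s'$, and for every $\tau'\in\mathscr{T}_m$ there exists $\tau\in\mathscr{T}_m$ with $\tau' s'=\tau s$. *)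

theory Defs
  imports "HOL-Combinatorics.Permutations"
begin

text \<open>Sequences in S^m are lists of length m over the type 'a (playing the role of S);
  position i of the paper (1-based) is list index i - 1.
  Permutations of I_m = {1..m} are functions nat => nat that permute {1..m}.\<close>

definition Tm :: "nat \<Rightarrow> (nat \<Rightarrow> nat) set" where
  "Tm m = {\<sigma>. \<sigma> permutes {1..m} \<and>
     (\<exists>t\<in>{1..m}. (\<forall>i. 1 \<le> i \<and> i < t \<longrightarrow> \<sigma> i > \<sigma> (Suc i)) \<and> \<sigma> t = 1 \<and>
                  (\<forall>i. t \<le> i \<and> i < m \<longrightarrow> \<sigma> i < \<sigma> (Suc i)))}"

definition act :: "(nat \<Rightarrow> nat) \<Rightarrow> 'a list \<Rightarrow> 'a list" where
  "act \<sigma> s = map (\<lambda>i. s ! (inv \<sigma> i - 1)) [1..<Suc (length s)]"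

definition tau :: "nat \<Rightarrow> nat \<Rightarrow> nat" where
  "tau i j = (if 1 \<le> j \<and> j \<le> i then i + 1 - j else j)"

definition revseq :: "'a list \<Rightarrow> 'a list" where
  "revseq s = act (tau (length s)) s"

definition mirrored :: "'a list \<Rightarrow> 'a list \<Rightarrow> bool" where
  "mirrored s s' \<longleftrightarrow> length s = length s' \<and>
     (\<forall>\<sigma>\<in>Tm (length s). \<exists>\<sigma>'\<in>Tm (length s). act \<sigma> s = act \<sigma>' s') \<and>
     (\<forall>\<tau>'\<in>Tm (length s). \<exists>\<tau>\<in>Tm (length s). act \<tau>' s' = act \<tau> s)"

end

theory Submission
  imports Defs
begin


lemma split_leading_run:
  "\<not> set s \<subseteq> {x} \<Longrightarrow> \<exists>a r. s = replicate a x @ r \<and> r \<noteq> [] \<and> hd r \<noteq> x"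
proof (induction s)
  case (Cons c s)
  show ?case
  proof (cases "c = x")
    case True
    with Cons.prems have "\<not> set s \<subseteq> {x}"
      by simp
    then obtain a r where "s = replicate a x @ r" "r \<noteq> []" "hd r \<noteq> x"
      using Cons.IH by blast
    with True have "c # s = replicate (Suc a) x @ r \<and> r \<noteq> [] \<and> hd r \<noteq> x"
      by simp
    then show ?thesis by blast
  next
    case False
    then have "c # s = replicate 0 x @ (c # s) \<and> c # s \<noteq> [] \<and> hd (c # s) \<noteq> x"
      by simp
    then show ?thesis by blast
  qed
qed simp

lemma split_end_runs:
  assumes "\<not> set s \<subseteq> {x}"
  obtains a b u where "s = replicate a x @ u @ replicate b x" "u \<noteq> []" "hd u \<noteq> x" "last u \<noteq> x"
proof -
  obtain a r where s: "s = replicate a x @ r" and r: "r \<noteq> []" "hd r \<noteq> x"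
    using split_leading_run[OF assms] by blast
  then have "hd r \<in> set (rev r)"
    by simp
  with r have "\<not> set (rev r) \<subseteq> {x}"
    by blast
  then obtain b v where rv: "rev r = replicate b x @ v" and v: "v \<noteq> []" "hd v \<noteq> x"
    using split_leading_run[of "rev r" x] by blast
  have r_eq: "r = rev v @ replicate b x"
    using arg_cong[OF rv, of rev] by simp
  show thesis
  proof (rule that)
    show "s = replicate a x @ rev v @ replicate b x"
      using s r_eq by simp
    show "rev v \<noteq> []" "last (rev v) \<noteq> x"
      using v by (simp_all add: last_rev)
    show "hd (rev v) \<noteq> x"
      using r r_eq v by simp
  qed
qed

lemma palindrome_if_conjugate_by_replicate:
  assumes "x \<noteq> y" and "0 < b"
  shows "y # Z = Z' @ [y] \<Longrightarrow> Z @ replicate b x = replicate b x @ Z' \<Longrightarrow> rev (y # Z) = y # Z"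
proof (induction Z arbitrary: Z' rule: length_induct)
  case (1 Z)
  note rot = "1.prems"(1) and conj = "1.prems"(2)
  show ?case
  proof (cases "length Z < b")
    case True
    then have "Z = replicate (length Z) x"
      using arg_cong[OF conj, of "take (length Z)"] by simp
    moreover have "last (y # Z) = y"
      using rot by simp
    ultimately have "Z = []"
      using assms(1) by (cases "length Z") (auto split: if_splits)
    then show ?thesis by simp
  next
    case False
    then have "take b Z = replicate b x"
      using arg_cong[OF conj, of "take b"] by simp
    then obtain Z1 where Z: "Z = replicate b x @ Z1"
      by (metis append_take_drop_id)
    then have Z': "Z' = Z1 @ replicate b x"
      using conj by simp
    have rot1: "y # replicate b x @ Z1 = Z1 @ replicate b x @ [y]"
      using rot Z Z' by simp
    show ?thesis
    proof (cases "Z1 = []")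
      case True
      then have "y # replicate b x = replicate b x @ [y]"
        using rot1 by simp
      then show ?thesis
        using assms by (cases b) auto
    next
      case False
      have "hd Z1 = y" "last Z1 = y"
        using arg_cong[OF rot1, of hd] arg_cong[OF rot1, of last] False by simp_all
      then obtain Z2 Z2' where Z1: "Z1 = y # Z2" and rot2: "y # Z2 = Z2' @ [y]"
        using False by (metis append_butlast_last_id list.collapse)
      have "replicate b x @ y # Z2 = Z2 @ replicate b x @ [y]"
        using rot1 unfolding Z1 by simp
      then have "Z2 @ replicate b x = replicate b x @ Z2'"
        unfolding rot2 by simp
      moreover have "length Z2 < length Z"
        using Z Z1 by simp
      ultimately have "rev Z1 = Z1"
        using "1.IH" rot2 Z1 by blast
      then show ?thesis
        using Z Z' rot by simp
    qed
  qed
qed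

inductive peel :: "'a list \<Rightarrow> 'a list \<Rightarrow> bool" where
  peel_Nil: "peel [] []"
| peel_hd: "peel s w \<Longrightarrow> peel (x # s) (x # w)"
| peel_last: "peel s w \<Longrightarrow> peel (s @ [x]) (x # w)"

lemma peel_length: "peel s w \<Longrightarrow> length w = length s"
  by (induction rule: peel.induct) auto

lemma peel_set: "peel s w \<Longrightarrow> set w = set s"
  by (induction rule: peel.induct) auto

lemma peel_refl: "peel s s"
  by (induction s) (auto intro: peel_Nil peel_hd)

lemma peel_rev: "peel s w \<Longrightarrow> peel (rev s) w"
  by (induction rule: peel.induct) (auto intro: peel.intros)

lemma peel_rev_eq [simp]: "peel (rev s) = peel s"
  using peel_rev[of "rev s"] peel_rev[of s] by (auto simp: fun_eq_iff)

lemma peel_rev_self: "peel s (rev s)"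
  using peel_refl[of "rev s"] by simp

lemma peel_Cons_iff: "peel s (y # w) \<longleftrightarrow>
   s \<noteq> [] \<and> (hd s = y \<and> peel (tl s) w \<or> last s = y \<and> peel (butlast s) w)"
proof
  assume "peel s (y # w)"
  then show "s \<noteq> [] \<and> (hd s = y \<and> peel (tl s) w \<or> last s = y \<and> peel (butlast s) w)"
    by cases auto
next
  assume "s \<noteq> [] \<and> (hd s = y \<and> peel (tl s) w \<or> last s = y \<and> peel (butlast s) w)"
  then show "peel s (y # w)"
    by (metis append_butlast_last_id list.collapse peel_hd peel_last)
qed

lemma peel_replicate_iff: "peel (replicate n x) w \<longleftrightarrow> w = replicate n x"
proof
  assume "peel (replicate n x) w"
  then have "length w = n" "set w \<subseteq> {x}"
    using peel_length peel_set by fastforce+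
  then show "w = replicate n x"
    by (metis replicate_length_same singletonD subsetD)
qed (simp add: peel_refl)

lemma ex_le_add_Suc_iff:
  fixes a b k :: nat
  assumes "Suc k \<le> a + b"
  shows "(\<exists>i\<le>a. \<exists>j\<le>b. i + j + Suc k = a + b \<and> P i j) \<longleftrightarrow>
    0 < a \<and> (\<exists>i\<le>a - 1. \<exists>j\<le>b. i + j + k = a - 1 + b \<and> P i j) \<or>
    0 < b \<and> (\<exists>i\<le>a. \<exists>j\<le>b - 1. i + j + k = a + (b - 1) \<and> P i j)"
proof
  assume "\<exists>i\<le>a. \<exists>j\<le>b. i + j + Suc k = a + b \<and> P i j"
  then obtain i j where "i \<le> a" "j \<le> b" "i + j + Suc k = a + b" "P i j" by blast
  then show "0 < a \<and> (\<exists>i\<le>a - 1. \<exists>j\<le>b. i + j + k = a - 1 + b \<and> P i j) \<or>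
    0 < b \<and> (\<exists>i\<le>a. \<exists>j\<le>b - 1. i + j + k = a + (b - 1) \<and> P i j)"
    by (cases "i < a") auto
next
  assume "0 < a \<and> (\<exists>i\<le>a - 1. \<exists>j\<le>b. i + j + k = a - 1 + b \<and> P i j) \<or>
    0 < b \<and> (\<exists>i\<le>a. \<exists>j\<le>b - 1. i + j + k = a + (b - 1) \<and> P i j)"
  then show "\<exists>i\<le>a. \<exists>j\<le>b. i + j + Suc k = a + b \<and> P i j"
  proof (elim disjE conjE exE)
    fix i j assume "0 < a" "i \<le> a - 1" "j \<le> b" "i + j + k = a - 1 + b" "P i j"
    then have "i \<le> a \<and> j \<le> b \<and> i + j + Suc k = a + b \<and> P i j" by linarith
    then show ?thesis by blast
  next
    fix i j assume "0 < b" "i \<le> a" "j \<le> b - 1" "i + j + k = a + (b - 1)" "P i j"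
    then have "i \<le> a \<and> j \<le> b \<and> i + j + Suc k = a + b \<and> P i j" by linarith
    then show ?thesis by blast
  qed
qed

context
  fixes u :: "'a list" and x :: 'a
  assumes u: "u \<noteq> []" and hd_u: "hd u \<noteq> x" and last_u: "last u \<noteq> x"
begin

lemma hd_runs: "hd (replicate a x @ u @ replicate b x) = x \<longleftrightarrow> 0 < a"
  using u hd_u by (cases a) auto

lemma last_runs: "last (replicate a x @ u @ replicate b x) = x \<longleftrightarrow> 0 < b"
  using u last_u by (cases b) auto

lemma peel_runs_Cons_iff:
  "peel (replicate a x @ u @ replicate b x) (x # w) \<longleftrightarrow>
     0 < a \<and> peel (replicate (a - 1) x @ u @ replicate b x) w \<or>
     0 < b \<and> peel (replicate a x @ u @ replicate (b - 1) x) w"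
proof -
  have "0 < a \<Longrightarrow> tl (replicate a x @ u @ replicate b x) = replicate (a - 1) x @ u @ replicate b x"
    by (cases a) auto
  moreover have "0 < b \<Longrightarrow> butlast (replicate a x @ u @ replicate b x) = replicate a x @ u @ replicate (b - 1) x"
    using u by (cases b) (auto simp: butlast_append replicate_append_same[symmetric])
  ultimately show ?thesis
    unfolding peel_Cons_iff[of "replicate a x @ u @ replicate b x"] hd_runs last_runs by auto
qed

lemma peel_runs_Cons_other:
  assumes "y \<noteq> x" and "peel (replicate a x @ u @ replicate b x) (y # w)"
  shows "a = 0 \<or> b = 0"
proof -
  have "hd (replicate a x @ u @ replicate b x) = y \<or> last (replicate a x @ u @ replicate b x) = y"
    using assms(2) peel_Cons_iff by metis
  with assms(1) show ?thesis
    using hd_runs last_runs by auto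
qed

lemma peel_runs_iff:
  "k \<le> a + b \<Longrightarrow> peel (replicate a x @ u @ replicate b x) (replicate k x @ w) \<longleftrightarrow>
    (\<exists>i\<le>a. \<exists>j\<le>b. i + j + k = a + b \<and> peel (replicate i x @ u @ replicate j x) w)"
proof (induction k arbitrary: a b)
  case 0
  have "i \<le> a \<Longrightarrow> j \<le> b \<Longrightarrow> i + j + 0 = a + b \<longleftrightarrow> i = a \<and> j = b" for i j
    by linarith
  then show ?case by auto
next
  case (Suc k)
  have "peel (replicate a x @ u @ replicate b x) (replicate (Suc k) x @ w) \<longleftrightarrow>
       0 < a \<and> peel (replicate (a - 1) x @ u @ replicate b x) (replicate k x @ w) \<or>
       0 < b \<and> peel (replicate a x @ u @ replicate (b - 1) x) (replicate k x @ w)"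
    unfolding replicate_Suc append_Cons by (rule peel_runs_Cons_iff)
  moreover have "0 < a \<Longrightarrow> peel (replicate (a - 1) x @ u @ replicate b x) (replicate k x @ w) \<longleftrightarrow>
       (\<exists>i\<le>a - 1. \<exists>j\<le>b. i + j + k = a - 1 + b \<and> peel (replicate i x @ u @ replicate j x) w)"
    by (rule Suc.IH) (use Suc.prems in linarith)
  moreover have "0 < b \<Longrightarrow> peel (replicate a x @ u @ replicate (b - 1) x) (replicate k x @ w) \<longleftrightarrow>
       (\<exists>i\<le>a. \<exists>j\<le>b - 1. i + j + k = a + (b - 1) \<and> peel (replicate i x @ u @ replicate j x) w)"
    by (rule Suc.IH) (use Suc.prems in linarith)
  ultimately show ?case
    using ex_le_add_Suc_iff[OF Suc.prems] by (simp only: cong: conj_cong)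
qed

lemma peel_runs_strip:
  "peel (replicate a x @ u @ replicate b x) (replicate (a + b) x @ w) \<longleftrightarrow> peel u w"
  by (subst peel_runs_iff) simp_all

lemma not_peel_runs_too_long:
  assumes "a + b < k"
  shows "\<not> peel (replicate a x @ u @ replicate b x) (replicate k x @ w)"
proof -
  have "k = a + b + Suc (k - a - b - 1)"
    using assms by linarith
  then have "replicate k x @ w = replicate (a + b) x @ x # replicate (k - a - b - 1) x @ w"
    by (metis append.assoc append_Cons replicate_Suc replicate_add)
  moreover have "\<not> peel u (x # w')" for w'
    using hd_u last_u by (simp add: peel_Cons_iff)
  ultimately show ?thesis
    by (simp add: peel_runs_strip)
qed

lemma peel_runs_min_le:
  assumes "y \<noteq> x" and p: "peel (replicate a x @ u @ replicate b x) (replicate k x @ y # w)"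
  shows "min a b \<le> k"
proof -
  have "k \<le> a + b"
    using not_peel_runs_too_long p by (meson not_le)
  then obtain i j where "i \<le> a" "j \<le> b" "i + j + k = a + b"
      "peel (replicate i x @ u @ replicate j x) (y # w)"
    using p peel_runs_iff by blast
  then show ?thesis
    using peel_runs_Cons_other[OF \<open>y \<noteq> x\<close>] by fastforce
qed

lemma peel_runs_min_witness:
  "\<exists>y w. y \<noteq> x \<and> peel (replicate a x @ u @ replicate b x) (replicate (min a b) x @ y # w)"
proof (cases "a \<le> b")
  case True
  then have "replicate a x @ u @ replicate b x = replicate (min a b) x @ hd u # (tl u @ replicate b x)"
    using u by simp
  then show ?thesis
    using peel_refl hd_u by metis
next
  case False
  have "rev u = last u # rev (butlast u)"
    using u by (metis append_butlast_last_id rev.simps(2) rev_rev_ident)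
  then have "rev (replicate a x @ u @ replicate b x) =
      replicate (min a b) x @ last u # (rev (butlast u) @ replicate a x)"
    using False by (simp add: min_def)
  then show ?thesis
    using peel_rev_self last_u by metis
qed

lemma peel_runs_shorter_prefix:
  assumes "a < b" and "y \<noteq> x"
  shows "peel (replicate a x @ u @ replicate b x) (replicate a x @ y # w) \<longleftrightarrow>
    y = hd u \<and> peel (tl u @ replicate b x) w"
proof -
  have "peel (replicate a x @ u @ replicate b x) (replicate a x @ y # w) \<longleftrightarrow>
      peel (u @ replicate b x) (y # w)"
  proof
    assume "peel (replicate a x @ u @ replicate b x) (replicate a x @ y # w)"
    then obtain i j where "i \<le> a" "j \<le> b" "i + j + a = a + b"
        "peel (replicate i x @ u @ replicate j x) (y # w)"
      using peel_runs_iff by auto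
    moreover from this have "i = 0"
      using peel_runs_Cons_other[OF \<open>y \<noteq> x\<close>] \<open>a < b\<close> by fastforce
    ultimately show "peel (u @ replicate b x) (y # w)"
      by simp
  next
    assume "peel (u @ replicate b x) (y # w)"
    then show "peel (replicate a x @ u @ replicate b x) (replicate a x @ y # w)"
      using peel_runs_iff[of a a b "y # w"] by auto
  qed
  also have "\<dots> \<longleftrightarrow> y = hd u \<and> peel (tl u @ replicate b x) w"
    using u assms by (auto simp: peel_Cons_iff last_append)
  finally show ?thesis .
qed

end

lemma peel_runs_le:
  assumes u: "u \<noteq> []" "hd u \<noteq> x" "last u \<noteq> x" and v: "v \<noteq> []" "hd v \<noteq> x" "last v \<noteq> x"
    and le: "peel (replicate a x @ u @ replicate b x) \<le> peel (replicate a' x @ v @ replicate b' x)"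
  shows "a + b \<le> a' + b'" and "min a' b' \<le> min a b"
proof -
  have "peel (replicate a' x @ v @ replicate b' x) (replicate (a + b) x @ u)"
    using le peel_runs_strip[OF u] peel_refl by blast
  then show "a + b \<le> a' + b'"
    using not_peel_runs_too_long[OF v] by (meson not_le)
  obtain y w where "y \<noteq> x" "peel (replicate a x @ u @ replicate b x) (replicate (min a b) x @ y # w)"
    using peel_runs_min_witness[OF u] by blast
  then show "min a' b' \<le> min a b"
    using le peel_runs_min_le[OF v] by blast
qed

lemma peel_runs_eq:
  assumes u: "u \<noteq> []" "hd u \<noteq> x" "last u \<noteq> x" and v: "v \<noteq> []" "hd v \<noteq> x" "last v \<noteq> x"
    and eq: "peel (replicate a x @ u @ replicate b x) = peel (replicate a' x @ v @ replicate b' x)"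
  shows "peel u = peel v" and "a' = a \<and> b' = b \<or> a' = b \<and> b' = a"
proof -
  have "a + b = a' + b'" "min a b = min a' b'"
    using peel_runs_le[OF u v] peel_runs_le[OF v u] eq by (metis order_refl antisym)+
  then show "a' = a \<and> b' = b \<or> a' = b \<and> b' = a"
    by linarith
  show "peel u = peel v"
  proof
    fix w
    show "peel u w = peel v w"
      using eq peel_runs_strip[OF u, of a b w] peel_runs_strip[OF v, of a' b' w] \<open>a + b = a' + b'\<close>
      by simp
  qed
qed


lemma peel_runs_swap_palindrome:
  fixes u :: "'a list"
  assumes u: "u \<noteq> []" and hd_u: "hd u \<noteq> x" and last_u: "last u \<noteq> x"
    and IH: "\<And>t t'. length (t :: 'a list) < a + b + length u \<Longrightarrow> peel t = peel t' \<Longrightarrow> t' = t \<or> t' = rev t"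
    and "a < b"
    and eq: "peel (replicate a x @ u @ replicate b x) = peel (replicate b x @ u @ replicate a x)"
  shows "rev u = u"
proof -
  have "peel (tl u @ replicate b x) w \<longleftrightarrow> hd u = last u \<and> peel (replicate b x @ butlast u) w" for w
  proof -
    have "peel (tl u @ replicate b x) w \<longleftrightarrow>
        peel (replicate a x @ u @ replicate b x) (replicate a x @ hd u # w)"
      using peel_runs_shorter_prefix[OF u hd_u last_u \<open>a < b\<close> hd_u] by simp
    also have "\<dots> \<longleftrightarrow> peel (replicate a x @ rev u @ replicate b x) (replicate a x @ hd u # w)"
      using eq by (metis peel_rev_eq rev_append rev_replicate append_assoc)
    also have "\<dots> \<longleftrightarrow> hd u = last u \<and> peel (rev (butlast u) @ replicate b x) w"
      using peel_runs_shorter_prefix[of "rev u" x, OF _ _ _ \<open>a < b\<close> hd_u] u hd_u last_u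
        butlast_rev[of "rev u"]
      by (simp add: hd_rev last_rev)
    also have "\<dots> \<longleftrightarrow> hd u = last u \<and> peel (replicate b x @ butlast u) w"
      by (metis peel_rev_eq rev_append rev_replicate)
    finally show ?thesis .
  qed
  then have "hd u = last u" and peel_eq: "peel (tl u @ replicate b x) = peel (replicate b x @ butlast u)"
    using peel_refl by blast+
  have "length (tl u @ replicate b x) < a + b + length u"
    using u by (cases u) auto
  then consider "replicate b x @ butlast u = tl u @ replicate b x"
    | "replicate b x @ butlast u = rev (tl u @ replicate b x)"
    using IH[OF _ peel_eq] by blast
  then show ?thesis
  proof cases
    case 1
    have rot: "hd u # tl u = butlast u @ [hd u]"
      using u \<open>hd u = last u\<close> by (metis append_butlast_last_id list.collapse)
    have "0 < b"
      using \<open>a < b\<close> by simp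
    then show ?thesis
      using palindrome_if_conjugate_by_replicate[OF hd_u[symmetric] _ rot 1[symmetric]] u
      by simp
  next
    case 2
    then have "butlast u = rev (tl u)"
      by simp
    then have "rev u = butlast u @ [last u]"
      using u \<open>hd u = last u\<close> by (metis list.collapse rev.simps(2))
    then show ?thesis
      using u by simp
  qed
qed

lemma peel_eq_imp_eq_or_rev:
  fixes s s' :: "'a list"
  shows "peel s = peel s' \<Longrightarrow> s' = s \<or> s' = rev s"
proof (induction s arbitrary: s' rule: length_induct)
  case (1 s)
  have IH: "peel t = peel t' \<Longrightarrow> t' = t \<or> t' = rev t" if "length t < length s" for t t' :: "'a list"
    using "1.IH" that by blast
  have "peel s s'"
    using "1.prems" peel_refl by metis
  then have set_s': "set s' = set s"
    by (rule peel_set)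
  show ?case
  proof (cases "set s \<subseteq> {hd s}")
    case True
    then have s: "s = replicate (length s) (hd s)"
      by (metis replicate_length_same singletonD subsetD)
    have "s' = s"
      using \<open>peel s s'\<close> peel_replicate_iff[of "length s" "hd s" s'] by (subst (asm) s) (simp flip: s)
    then show ?thesis ..
  next
    case False
    define x where "x = hd s"
    have "\<not> set s \<subseteq> {x}" "\<not> set s' \<subseteq> {x}"
      using False set_s' unfolding x_def by simp_all
    obtain a b u where s: "s = replicate a x @ u @ replicate b x"
        and u: "u \<noteq> []" "hd u \<noteq> x" "last u \<noteq> x"
      using split_end_runs[OF \<open>\<not> set s \<subseteq> {x}\<close>] by blast
    obtain a' b' v where s': "s' = replicate a' x @ v @ replicate b' x"
        and v: "v \<noteq> []" "hd v \<noteq> x" "last v \<noteq> x"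
      using split_end_runs[OF \<open>\<not> set s' \<subseteq> {x}\<close>] by blast
    have eq: "peel (replicate a x @ u @ replicate b x) = peel (replicate a' x @ v @ replicate b' x)"
      using "1.prems" s s' by simp
    have "hd s = x"
      by (simp add: x_def)
    then have "hd (replicate a x @ u @ replicate b x) = x"
      by (simp only: s)
    then have "0 < a"
      using hd_runs[OF u] by blast
    then have "v = u \<or> v = rev u"
      using IH peel_runs_eq(1)[OF u v eq] s by simp
    moreover have "a' = a \<and> b' = b \<or> a' = b \<and> b' = a"
      by (rule peel_runs_eq(2)[OF u v eq])
    ultimately have cases: "s' = s \<or> s' = rev s \<or> s' = t \<or> s' = rev t"
      if "t = replicate b x @ u @ replicate a x" for t
      using s s' that by auto
    define t where "t = replicate b x @ u @ replicate a x"
    have "t = s \<or> t = rev s" if "s' = t \<or> s' = rev t"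
    proof -
      have IH_u: "peel r = peel r' \<Longrightarrow> r' = r \<or> r' = rev r" if "length r < a + b + length u"
        for r r' :: "'a list"
        using IH that s by simp
      have "peel s' = peel t"
        using that by auto
      with "1.prems" have "peel s = peel t"
        by simp
      then have swap: "peel (replicate a x @ u @ replicate b x) = peel (replicate b x @ u @ replicate a x)"
        unfolding s t_def .
      have "a = b \<or> rev u = u"
      proof (cases a b rule: linorder_cases)
        case less
        then show ?thesis
          using peel_runs_swap_palindrome[OF u IH_u less swap] by simp
      next
        case greater
        then show ?thesis
          using peel_runs_swap_palindrome[OF u, of b a] IH_u swap by (simp add: ac_simps)
      qed simp
      then show ?thesis
        using s t_def by auto
    qed
    then show ?thesis
      using cases[OF t_def] by auto
  qed
qed

lemma peel_eq_iff: "peel s = peel s' \<longleftrightarrow> s' = s \<or> s' = rev s"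
  using peel_eq_imp_eq_or_rev by auto

lemma TmI:
  assumes "\<sigma> permutes {1..m}" and "t \<in> {1..m}" and "\<sigma> t = 1"
    and "\<And>i. 1 \<le> i \<Longrightarrow> i < t \<Longrightarrow> \<sigma> (Suc i) < \<sigma> i"
    and "\<And>i. t \<le> i \<Longrightarrow> i < m \<Longrightarrow> \<sigma> i < \<sigma> (Suc i)"
  shows "\<sigma> \<in> Tm m"
  using assms unfolding Tm_def by blast

lemma TmE:
  assumes "\<sigma> \<in> Tm m"
  obtains t where "\<sigma> permutes {1..m}" and "t \<in> {1..m}" and "\<sigma> t = 1"
    and "\<And>i. 1 \<le> i \<Longrightarrow> i < t \<Longrightarrow> \<sigma> (Suc i) < \<sigma> i"
    and "\<And>i. t \<le> i \<Longrightarrow> i < m \<Longrightarrow> \<sigma> i < \<sigma> (Suc i)"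
  using assms unfolding Tm_def by blast

lemma Tm_permutes: "\<sigma> \<in> Tm m \<Longrightarrow> \<sigma> permutes {1..m}"
  by (erule TmE)

lemma Tm_max_at_end:
  assumes "\<sigma> \<in> Tm m" and "2 \<le> m"
  shows "\<sigma> 1 = m \<or> \<sigma> m = m"
proof -
  obtain t where p: "\<sigma> permutes {1..m}" and t: "t \<in> {1..m}" "\<sigma> t = 1"
      and down: "\<And>i. 1 \<le> i \<Longrightarrow> i < t \<Longrightarrow> \<sigma> (Suc i) < \<sigma> i"
      and up: "\<And>i. t \<le> i \<Longrightarrow> i < m \<Longrightarrow> \<sigma> i < \<sigma> (Suc i)"
    using assms(1) by (rule TmE) blast
  have bound: "\<sigma> i \<le> m" if "i \<in> {1..m}" for i
    using permutes_in_image[OF p] that by auto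
  obtain j where j: "j \<in> {1..m}" "\<sigma> j = m"
    using permutes_image[OF p] assms(2) by (metis atLeastAtMost_iff imageE one_le_numeral order.trans order_refl)
  have "j = 1 \<or> j = m \<or> 1 < j \<and> j < t \<or> t \<le> j \<and> j < m"
    using j(1) by auto
  then consider "j = 1" | "j = m" | "1 < j" "j < t" | "t \<le> j" "j < m"
    by blast
  then show ?thesis
  proof cases
    case 3
    then obtain i where i: "j = Suc i" "1 \<le> i" "i < t"
      by (cases j) auto
    then have "\<sigma> i \<le> m" "m < \<sigma> i"
      using bound[of i] down[of i] j by auto
    then show ?thesis by simp
  next
    case 4
    with up[of j] bound[of "Suc j"] j show ?thesis by simp
  qed (use j in auto)
qed

lemma Tm_Suc:
  assumes "\<sigma> \<in> Tm n"
  shows "\<sigma> \<in> Tm (Suc n)"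
proof -
  obtain t where p: "\<sigma> permutes {1..n}" and t: "t \<in> {1..n}" "\<sigma> t = 1"
      and down: "\<And>i. 1 \<le> i \<Longrightarrow> i < t \<Longrightarrow> \<sigma> (Suc i) < \<sigma> i"
      and up: "\<And>i. t \<le> i \<Longrightarrow> i < n \<Longrightarrow> \<sigma> i < \<sigma> (Suc i)"
    using assms by (rule TmE) blast
  have "\<sigma> n \<le> n" "\<sigma> (Suc n) = Suc n"
    using permutes_in_image[OF p, of n] permutes_not_in[OF p, of "Suc n"] t(1) by auto
  then have "\<sigma> i < \<sigma> (Suc i)" if "t \<le> i" "i < Suc n" for i
    using up[of i] that by (cases "i = n") auto
  then show ?thesis
    using permutes_subset[OF p] t down by (intro TmI[of _ _ t]) auto
qed

lemma Tm_of_Suc: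
  assumes "\<sigma> \<in> Tm (Suc n)" and "\<sigma> (Suc n) = Suc n" and "1 \<le> n"
  shows "\<sigma> \<in> Tm n"
proof -
  obtain t where p: "\<sigma> permutes {1..Suc n}" and t: "t \<in> {1..Suc n}" "\<sigma> t = 1"
      and down: "\<And>i. 1 \<le> i \<Longrightarrow> i < t \<Longrightarrow> \<sigma> (Suc i) < \<sigma> i"
      and up: "\<And>i. t \<le> i \<Longrightarrow> i < Suc n \<Longrightarrow> \<sigma> i < \<sigma> (Suc i)"
    using assms(1) by (rule TmE) blast
  have "\<sigma> permutes {1..n}"
    using permutes_superset[OF p] assms(2) by (metis Diff_iff atLeastAtMost_iff le_SucE)
  moreover have "t \<in> {1..n}"
    using t assms by (auto simp: le_Suc_eq)
  ultimately show ?thesis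
    using t down up by (intro TmI[of _ _ t]) auto
qed

definition shift_perm :: "nat \<Rightarrow> (nat \<Rightarrow> nat) \<Rightarrow> nat \<Rightarrow> nat" where
  "shift_perm n \<sigma> j = (if j = 1 then Suc n else if 2 \<le> j \<and> j \<le> Suc n then \<sigma> (j - 1) else j)"

definition unshift_perm :: "nat \<Rightarrow> (nat \<Rightarrow> nat) \<Rightarrow> nat \<Rightarrow> nat" where
  "unshift_perm n \<sigma> j = (if 1 \<le> j \<and> j \<le> n then \<sigma> (Suc j) else j)"

lemma shift_perm_Suc [simp]: "k \<in> {1..n} \<Longrightarrow> shift_perm n \<sigma> (Suc k) = \<sigma> k"
  by (auto simp: shift_perm_def)

lemma shift_perm_permutes:
  assumes p: "\<sigma> permutes {1..n}"
  shows "shift_perm n \<sigma> permutes {1..Suc n}"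
proof (rule inj_imp_permutes)
  have im: "\<sigma> k \<in> {1..n}" if "k \<in> {1..n}" for k
    using permutes_in_image[OF p] that by auto
  have cases: "j = 1 \<or> (\<exists>k\<in>{1..n}. j = Suc k)" if "j \<in> {1..Suc n}" for j
    using that by (cases j) auto
  show "shift_perm n \<sigma> j \<in> {1..Suc n}" if "j \<in> {1..Suc n}" for j
    using cases[OF that]
  proof
    assume "\<exists>k\<in>{1..n}. j = Suc k"
    then obtain k where "k \<in> {1..n}" "j = Suc k"
      by blast
    then show ?thesis
      using im[of k] by simp
  qed (simp add: shift_perm_def)
  have max_iff: "shift_perm n \<sigma> j = Suc n \<longleftrightarrow> j = 1" if "j \<in> {1..Suc n}" for j
    using cases[OF that]
  proof
    assume "\<exists>k\<in>{1..n}. j = Suc k"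
    then obtain k where "k \<in> {1..n}" "j = Suc k"
      by blast
    then show ?thesis
      using im[of k] by auto
  qed (simp add: shift_perm_def)
  show "inj_on (shift_perm n \<sigma>) {1..Suc n}"
  proof (rule inj_onI)
    fix i j assume i: "i \<in> {1..Suc n}" and j: "j \<in> {1..Suc n}"
      and eq: "shift_perm n \<sigma> i = shift_perm n \<sigma> j"
    show "i = j"
    proof (cases "i = 1 \<or> j = 1")
      case True
      then show ?thesis
        using max_iff[OF i] max_iff[OF j] eq by auto
    next
      case False
      then obtain i' j' where "i' \<in> {1..n}" "i = Suc i'" "j' \<in> {1..n}" "j = Suc j'"
        using cases[OF i] cases[OF j] by blast
      then show ?thesis
        using eq permutes_inj[OF p] by (simp add: inj_eq)
    qed
  qed
qed (auto simp: shift_perm_def)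

lemma shift_perm_Tm:
  assumes "\<sigma> \<in> Tm n"
  shows "shift_perm n \<sigma> \<in> Tm (Suc n)"
proof -
  obtain t where p: "\<sigma> permutes {1..n}" and t: "t \<in> {1..n}" "\<sigma> t = 1"
      and down: "\<And>i. 1 \<le> i \<Longrightarrow> i < t \<Longrightarrow> \<sigma> (Suc i) < \<sigma> i"
      and up: "\<And>i. t \<le> i \<Longrightarrow> i < n \<Longrightarrow> \<sigma> i < \<sigma> (Suc i)"
    using assms by (rule TmE) blast
  have "\<sigma> 1 \<le> n"
    using permutes_in_image[OF p, of 1] t(1) by auto
  then have "shift_perm n \<sigma> (Suc i) < shift_perm n \<sigma> i" if "1 \<le> i" "i < Suc t" for i
    using that t(1) down[of "i - 1"] by (cases "i = 1") (auto simp: shift_perm_def)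
  moreover have "shift_perm n \<sigma> i < shift_perm n \<sigma> (Suc i)" if "Suc t \<le> i" "i < Suc n" for i
    using that t(1) up[of "i - 1"] by (auto simp: shift_perm_def)
  ultimately show ?thesis
    using shift_perm_permutes[OF p] t by (intro TmI[of _ _ "Suc t"]) (auto simp: shift_perm_def)
qed

lemma shift_unshift_perm:
  assumes "\<sigma> permutes {1..Suc n}" and "\<sigma> 1 = Suc n"
  shows "shift_perm n (unshift_perm n \<sigma>) = \<sigma>"
  using assms permutes_not_in[OF assms(1)] by (auto simp: fun_eq_iff shift_perm_def unshift_perm_def)

lemma unshift_perm_Tm:
  assumes "\<sigma> \<in> Tm (Suc n)" and max: "\<sigma> 1 = Suc n" and "1 \<le> n"
  shows "unshift_perm n \<sigma> \<in> Tm n"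
proof -
  obtain t where p: "\<sigma> permutes {1..Suc n}" and t: "t \<in> {1..Suc n}" "\<sigma> t = 1"
      and down: "\<And>i. 1 \<le> i \<Longrightarrow> i < t \<Longrightarrow> \<sigma> (Suc i) < \<sigma> i"
      and up: "\<And>i. t \<le> i \<Longrightarrow> i < Suc n \<Longrightarrow> \<sigma> i < \<sigma> (Suc i)"
    using assms(1) by (rule TmE) blast
  have "t \<noteq> 1"
    using t max assms(3) by auto
  have "unshift_perm n \<sigma> permutes {1..n}"
  proof (rule inj_imp_permutes)
    show "unshift_perm n \<sigma> j \<in> {1..n}" if "j \<in> {1..n}" for j
    proof -
      have "\<sigma> (Suc j) \<noteq> \<sigma> 1"
        using permutes_inj[OF p] that by (auto dest: injD)
      then show ?thesis
        using that max permutes_in_image[OF p, of "Suc j"] by (auto simp: unshift_perm_def)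
    qed
    show "inj_on (unshift_perm n \<sigma>) {1..n}"
      using permutes_inj[OF p] by (auto simp: inj_on_def unshift_perm_def dest: injD)
  qed (auto simp: unshift_perm_def)
  then show ?thesis
    using t \<open>t \<noteq> 1\<close> down up by (intro TmI[of _ _ "t - 1"]) (auto simp: unshift_perm_def)
qed

lemma act_length [simp]: "length (act \<sigma> s) = length s"
  by (simp add: act_def del: upt_Suc)

lemma act_nth: "i < length s \<Longrightarrow> act \<sigma> s ! i = s ! (inv \<sigma> (Suc i) - 1)"
  by (simp add: act_def nth_map_upt del: upt_Suc)

lemma act_eq_iff:
  assumes p: "\<sigma> permutes {1..n}" and "length s = n" and "length w = n"
  shows "act \<sigma> s = w \<longleftrightarrow> (\<forall>j\<in>{1..n}. w ! (\<sigma> j - 1) = s ! (j - 1))"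
proof
  assume w: "act \<sigma> s = w"
  show "\<forall>j\<in>{1..n}. w ! (\<sigma> j - 1) = s ! (j - 1)"
  proof
    fix j assume "j \<in> {1..n}"
    then have "\<sigma> j \<in> {1..n}"
      using permutes_in_image[OF p] by blast
    then have "act \<sigma> s ! (\<sigma> j - 1) = s ! (inv \<sigma> (\<sigma> j) - 1)"
      using act_nth[of "\<sigma> j - 1" s] assms by auto
    then show "w ! (\<sigma> j - 1) = s ! (j - 1)"
      using w permutes_inverses(2)[OF p] by simp
  qed
next
  assume h: "\<forall>j\<in>{1..n}. w ! (\<sigma> j - 1) = s ! (j - 1)"
  show "act \<sigma> s = w"
  proof (rule nth_equalityI)
    fix k assume "k < length (act \<sigma> s)"
    then have "inv \<sigma> (Suc k) \<in> {1..n}" "\<sigma> (inv \<sigma> (Suc k)) = Suc k"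
      using assms permutes_in_image[OF permutes_inv[OF p]] permutes_inverses(1)[OF p] by auto
    then show "act \<sigma> s ! k = w ! k"
      using h act_nth[of k s \<sigma>] \<open>k < length (act \<sigma> s)\<close> by force
  qed (use assms in simp)
qed

lemma act_snoc:
  assumes p: "\<sigma> permutes {1..n}" and l: "length s = n"
  shows "act \<sigma> (s @ [c]) = act \<sigma> s @ [c]"
proof -
  have act_s: "\<forall>j\<in>{1..n}. act \<sigma> s ! (\<sigma> j - 1) = s ! (j - 1)"
    using act_eq_iff[OF p l, of "act \<sigma> s"] l by simp
  have "(act \<sigma> s @ [c]) ! (\<sigma> j - 1) = (s @ [c]) ! (j - 1)" if "j \<in> {1..Suc n}" for j
  proof (cases "j = Suc n")
    case True
    then show ?thesis
      using permutes_not_in[OF p, of j] l by (simp add: nth_append)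
  next
    case False
    with that have "j \<in> {1..n}"
      by auto
    moreover from this have "\<sigma> j \<in> {1..n}"
      using permutes_in_image[OF p] by auto
    ultimately show ?thesis
      using act_s l by (auto simp: nth_append)
  qed
  then show ?thesis
    using l by (subst act_eq_iff[OF permutes_subset[OF p]]) auto
qed

lemma act_shift_perm:
  assumes p: "\<sigma> permutes {1..n}" and l: "length s = n"
  shows "act (shift_perm n \<sigma>) (c # s) = act \<sigma> s @ [c]"
proof -
  have act_s: "\<forall>j\<in>{1..n}. act \<sigma> s ! (\<sigma> j - 1) = s ! (j - 1)"
    using act_eq_iff[OF p l, of "act \<sigma> s"] l by simp
  have "(act \<sigma> s @ [c]) ! (shift_perm n \<sigma> j - 1) = (c # s) ! (j - 1)" if "j \<in> {1..Suc n}" for j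
  proof (cases "j = 1")
    case True
    then show ?thesis
      using l by (simp add: nth_append shift_perm_def)
  next
    case False
    with that obtain i where i: "j = Suc i" "i \<in> {1..n}"
      by (cases j) auto
    moreover from this have "\<sigma> i \<in> {1..n}"
      using permutes_in_image[OF p] by auto
    ultimately show ?thesis
      using act_s l by (auto simp: nth_append shift_perm_def)
  qed
  then show ?thesis
    using l by (subst act_eq_iff[OF shift_perm_permutes[OF p]]) auto
qed

lemma act_Tm_Suc_cases:
  assumes \<sigma>: "\<sigma> \<in> Tm (Suc (Suc n))" and len: "length s = Suc (Suc n)"
  obtains \<sigma>' where "\<sigma>' \<in> Tm (Suc n)" "act \<sigma> s = act \<sigma>' (tl s) @ [hd s]"
    | "\<sigma> \<in> Tm (Suc n)" "act \<sigma> s = act \<sigma> (butlast s) @ [last s]"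
proof -
  have p: "\<sigma> permutes {1..Suc (Suc n)}"
    using \<sigma> by (rule Tm_permutes)
  have "s \<noteq> []"
    using len by auto
  then have s: "s = hd s # tl s" "s = butlast s @ [last s]"
    by simp_all
  consider "\<sigma> 1 = Suc (Suc n)" | "\<sigma> (Suc (Suc n)) = Suc (Suc n)"
    using Tm_max_at_end[OF \<sigma>] by fastforce
  then show thesis
  proof cases
    case 1
    have "unshift_perm (Suc n) \<sigma> \<in> Tm (Suc n)"
      using unshift_perm_Tm[OF \<sigma> 1] by simp
    moreover have "act \<sigma> s = act (unshift_perm (Suc n) \<sigma>) (tl s) @ [hd s]"
      using act_shift_perm[OF Tm_permutes[OF calculation], of "tl s" "hd s"] len s(1)
        shift_unshift_perm[OF p 1] by simp
    ultimately show thesis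
      by (rule that(1))
  next
    case 2
    have "\<sigma> \<in> Tm (Suc n)"
      using Tm_of_Suc[OF \<sigma> 2] by simp
    moreover have "act \<sigma> s = act \<sigma> (butlast s) @ [last s]"
      using act_snoc[OF Tm_permutes[OF calculation], of "butlast s" "last s"] len s(2) by simp
    ultimately show thesis
      by (rule that(2))
  qed
qed

lemma act_Tm_iff_peel:
  "length s = Suc n \<Longrightarrow> (\<exists>\<sigma>\<in>Tm (Suc n). act \<sigma> s = w) \<longleftrightarrow> peel s (rev w)"
proof (induction n arbitrary: s w)
  case 0
  then obtain c where s: "s = [c]"
    by (cases s) auto
  have "act \<sigma> [c] = [c]" if "\<sigma> \<in> Tm 1" for \<sigma>
  proof -
    have p: "\<sigma> permutes {1..1}"
      using that by (rule Tm_permutes)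
    then have "\<sigma> 1 = 1"
      using permutes_in_image[OF p, of 1] by auto
    then show ?thesis
      using act_eq_iff[OF p, of "[c]" "[c]"] by simp
  qed
  moreover have "id \<in> Tm 1"
    by (rule TmI[of _ _ 1]) auto
  ultimately show ?case
    using s peel_replicate_iff[of 1 c "rev w"] by (auto simp: rev_swap)
next
  case (Suc n)
  have len: "length (tl s) = Suc n" "length (butlast s) = Suc n"
    using Suc.prems by auto
  have "s \<noteq> []"
    using Suc.prems by auto
  then have s: "s = hd s # tl s" "s = butlast s @ [last s]"
    by simp_all
  show ?case
  proof
    assume "\<exists>\<sigma>\<in>Tm (Suc (Suc n)). act \<sigma> s = w"
    then obtain \<sigma> where \<sigma>: "\<sigma> \<in> Tm (Suc (Suc n))" and w: "act \<sigma> s = w"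
      by blast
    from \<sigma> Suc.prems show "peel s (rev w)"
    proof (rule act_Tm_Suc_cases)
      fix \<sigma>' assume "\<sigma>' \<in> Tm (Suc n)" and w': "act \<sigma> s = act \<sigma>' (tl s) @ [hd s]"
      then have "peel (tl s) (rev (act \<sigma>' (tl s)))"
        using Suc.IH[OF len(1)] by blast
      then show ?thesis
        using peel_hd[of "tl s"] s(1) w w' by (metis rev_append rev_singleton_conv append_Cons append_Nil)
    next
      assume "\<sigma> \<in> Tm (Suc n)" and w': "act \<sigma> s = act \<sigma> (butlast s) @ [last s]"
      then have "peel (butlast s) (rev (act \<sigma> (butlast s)))"
        using Suc.IH[OF len(2)] by blast
      then show ?thesis
        using peel_last[of "butlast s"] s(2) w w' by (metis rev_append rev_singleton_conv append_Cons append_Nil)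
    qed
  next
    assume "peel s (rev w)"
    moreover obtain c w' where w: "rev w = c # w'"
      using peel_length[OF \<open>peel s (rev w)\<close>] Suc.prems by (cases "rev w") auto
    ultimately have "hd s = c \<and> peel (tl s) w' \<or> last s = c \<and> peel (butlast s) w'"
      using peel_Cons_iff by metis
    moreover have "w = rev w' @ [c]"
      using w by (metis rev_rev_ident rev.simps(2))
    ultimately show "\<exists>\<sigma>\<in>Tm (Suc (Suc n)). act \<sigma> s = w"
    proof (elim disjE conjE)
      assume "hd s = c" "peel (tl s) w'" "w = rev w' @ [c]"
      then obtain \<sigma> where "\<sigma> \<in> Tm (Suc n)" "act \<sigma> (tl s) = rev w'"
        using Suc.IH[OF len(1), of "rev w'"] by auto
      then show ?thesis
        using act_shift_perm[OF Tm_permutes len(1)] shift_perm_Tm s(1) \<open>hd s = c\<close> \<open>w = _\<close>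
        by metis
    next
      assume "last s = c" "peel (butlast s) w'" "w = rev w' @ [c]"
      then obtain \<sigma> where "\<sigma> \<in> Tm (Suc n)" "act \<sigma> (butlast s) = rev w'"
        using Suc.IH[OF len(2), of "rev w'"] by auto
      then show ?thesis
        using act_snoc[OF Tm_permutes len(2)] Tm_Suc s(2) \<open>last s = c\<close> \<open>w = _\<close>
        by metis
    qed
  qed
qed

lemma mirrored_iff_peel_eq:
  assumes "s \<noteq> []" and "length s' = length s"
  shows "mirrored s s' \<longleftrightarrow> peel s = peel s'"
proof -
  obtain n where n: "length s = Suc n"
    using assms(1) by (cases s) auto
  have "mirrored s s' \<longleftrightarrow> (\<forall>\<sigma>\<in>Tm (Suc n). \<exists>\<sigma>'\<in>Tm (Suc n). act \<sigma> s = act \<sigma>' s') \<and>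
      (\<forall>\<tau>'\<in>Tm (Suc n). \<exists>\<tau>\<in>Tm (Suc n). act \<tau>' s' = act \<tau> s)"
    unfolding mirrored_def using assms(2) n by simp
  also have "\<dots> \<longleftrightarrow> (\<forall>w. (\<exists>\<sigma>\<in>Tm (Suc n). act \<sigma> s = w) \<longleftrightarrow> (\<exists>\<sigma>\<in>Tm (Suc n). act \<sigma> s' = w))"
  proof
    assume "(\<forall>\<sigma>\<in>Tm (Suc n). \<exists>\<sigma>'\<in>Tm (Suc n). act \<sigma> s = act \<sigma>' s') \<and>
      (\<forall>\<tau>'\<in>Tm (Suc n). \<exists>\<tau>\<in>Tm (Suc n). act \<tau>' s' = act \<tau> s)"
    then show "\<forall>w. (\<exists>\<sigma>\<in>Tm (Suc n). act \<sigma> s = w) \<longleftrightarrow> (\<exists>\<sigma>\<in>Tm (Suc n). act \<sigma> s' = w)"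
      by metis
  next
    assume R: "\<forall>w. (\<exists>\<sigma>\<in>Tm (Suc n). act \<sigma> s = w) \<longleftrightarrow> (\<exists>\<sigma>\<in>Tm (Suc n). act \<sigma> s' = w)"
    show "(\<forall>\<sigma>\<in>Tm (Suc n). \<exists>\<sigma>'\<in>Tm (Suc n). act \<sigma> s = act \<sigma>' s') \<and>
      (\<forall>\<tau>'\<in>Tm (Suc n). \<exists>\<tau>\<in>Tm (Suc n). act \<tau>' s' = act \<tau> s)"
      using R by metis
  qed
  also have "\<dots> \<longleftrightarrow> (\<forall>w. peel s (rev w) \<longleftrightarrow> peel s' (rev w))"
    using act_Tm_iff_peel[OF n] act_Tm_iff_peel[of s' n] assms(2) n by simp
  also have "\<dots> \<longleftrightarrow> peel s = peel s'"
    unfolding fun_eq_iff by (metis rev_rev_ident)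
  finally show ?thesis .
qed

lemma revseq_eq_rev: "revseq s = rev s"
proof -
  define n where "n = length s"
  have p: "tau n permutes {1..n}"
    by (rule inj_imp_permutes) (auto simp: tau_def inj_on_def)
  have "rev s ! (tau n j - 1) = s ! (j - 1)" if "j \<in> {1..n}" for j
    using that by (auto simp: tau_def rev_nth n_def)
  then have "act (tau n) s = rev s"
    using act_eq_iff[OF p, of s "rev s"] n_def by simp
  then show ?thesis
    unfolding revseq_def n_def .
qed

theorem mainTheorem9:
  fixes s s' :: "'a list" and m :: nat
  assumes "m \<ge> 1" and "length s = m" and "length s' = m"
  shows "mirrored s s' \<longleftrightarrow> s = s' \<or> s = revseq s'"
proof -
  have "mirrored s s' \<longleftrightarrow> peel s = peel s'"
    using assms by (intro mirrored_iff_peel_eq) auto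
  also have "\<dots> \<longleftrightarrow> s' = s \<or> s' = rev s"
    by (rule peel_eq_iff)
  also have "\<dots> \<longleftrightarrow> s = s' \<or> s = revseq s'"
    by (auto simp: revseq_eq_rev)
  finally show ?thesis .
qed

end
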